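(* Let $X$ be a regular Lindelöf $\Sigma$-space. If $X$ is homeomorphic to a subspace of a separable Hausdorff space, then $w(X)\leq\mathfrak c$.
   Context: A Hausdorff space $X$ is a Lindelöf $\Sigma$-space if there are families $\mathcal F$ and $\mathcal C$ of closed subsets of $X$ such that $\mathcal F$ is countable, every element of $\mathcal C$ is compact, $X=\bigcup\mathcal C$, and for every $C\in\mathcal C$ and every open $U\supseteq C$ there is $F\in\mathcal F$ with $C\subseteq F\subseteq U$. $w$ weight, $\mathfrak c=2^\omega$. *)

theory Defs
  imports "HOL-Analysis.Analysis" "HOL-Library.Equipollence"
begin

definition Lindelof_Sigma_space :: "'a topology \<Rightarrow> bool" where
  "Lindelof_Sigma_space X \<equiv> Hausdorff_space X \<and>
     (\<exists>\<F> \<C>. countable \<F> \<and> (\<forall>F\<in>\<F>. closedin X F) \<and>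
        (\<forall>C\<in>\<C>. closedin X C \<and> compactin X C) \<and>
        topspace X = \<Union>\<C> \<and>
        (\<forall>C\<in>\<C>. \<forall>U. openin X U \<and> C \<subseteq> U \<longrightarrow> (\<exists>F\<in>\<F>. C \<subseteq> F \<and> F \<subseteq> U)))"

definition base_of_topology :: "'a topology \<Rightarrow> 'a set set \<Rightarrow> bool" where
  "base_of_topology X \<B> \<equiv> (\<forall>V\<in>\<B>. openin X V) \<and>
     (\<forall>U x. openin X U \<and> x \<in> U \<longrightarrow> (\<exists>V\<in>\<B>. x \<in> V \<and> V \<subseteq> U))"

text \<open>w(X) \<le> continuum: there is a base of cardinality at most |UNIV :: real set| = 2^aleph0.\<close>
definition weight_le_continuum :: "'a topology \<Rightarrow> bool" where
  "weight_le_continuum X \<equiv> \<exists>\<B>. base_of_topology X \<B> \<and> \<B> \<lesssim> (UNIV :: real set)"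

end

theory Submission
  imports Defs
begin

text \<open>Let \<open>f\<close> embed \<open>X\<close> into a separable Hausdorff space \<open>Y\<close> with countable dense set \<open>D\<close>, and let
  \<open>\<F>\<close>, \<open>\<C>\<close> witness that \<open>X\<close> is a Lindelof \<open>\<Sigma>\<close>-space. To every \<open>g\<close> assigning a subset of \<open>Y\<close> to each
  \<open>F \<in> \<F>\<close> attach the open set \<open>X - cl(\<Union>F\<in>\<F>. F \<inter> f\<^sup>-\<^sup>1(cl g(F)))\<close>. Given \<open>x \<in> W\<close> with \<open>W\<close> open, pick an
  open \<open>U \<ni> x\<close> with \<open>cl U \<subseteq> W\<close>. Every \<open>z \<notin> W\<close> lies in a compact \<open>C \<in> \<C>\<close>; separating the compact
  sets \<open>f(C - W)\<close> and \<open>f(C \<inter> cl U)\<close> in \<open>Y\<close> by disjoint open \<open>P\<close>, \<open>Q\<close> and squeezing some \<open>F \<in> \<F>\<close>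
  between \<open>C\<close> and the corresponding open set gives \<open>F - W \<subseteq> f\<^sup>-\<^sup>1(P)\<close> and \<open>F \<inter> cl U \<inter> f\<^sup>-\<^sup>1(cl P) = \<emptyset>\<close>.
  Choosing such a \<open>P\<close> for every \<open>F\<close> where one exists yields an attached open set between \<open>x\<close>
  and \<open>W\<close>. Since \<open>cl P = cl (P \<inter> D)\<close>, \<open>g\<close> can be taken with values in \<open>Pow D\<close>, so these sets form a
  base indexed by \<open>Pow (\<F> \<times> D)\<close>, which has size at most the continuum.\<close>

definition Sigma_network :: "'a topology \<Rightarrow> 'a set set \<Rightarrow> 'a set set \<Rightarrow> bool" where
  "Sigma_network X \<F> \<C> \<longleftrightarrow> (\<forall>F\<in>\<F>. closedin X F) \<and>
     (\<forall>C\<in>\<C>. closedin X C \<and> compactin X C) \<and> topspace X = \<Union>\<C> \<and>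
     (\<forall>C\<in>\<C>. \<forall>U. openin X U \<and> C \<subseteq> U \<longrightarrow> (\<exists>F\<in>\<F>. C \<subseteq> F \<and> F \<subseteq> U))"

lemma Lindelof_Sigma_space_iff:
  "Lindelof_Sigma_space X \<longleftrightarrow> Hausdorff_space X \<and> (\<exists>\<F> \<C>. countable \<F> \<and> Sigma_network X \<F> \<C>)"
  unfolding Lindelof_Sigma_space_def Sigma_network_def by blast

definition network_open ::
    "'a topology \<Rightarrow> 'b topology \<Rightarrow> ('a \<Rightarrow> 'b) \<Rightarrow> 'a set set \<Rightarrow> ('a set \<Rightarrow> 'b set) \<Rightarrow> 'a set" where
  "network_open X Y f \<F> g =
     topspace X - X closure_of (\<Union>F\<in>\<F>. F \<inter> {x \<in> topspace X. f x \<in> Y closure_of g F})"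

lemma openin_network_open: "openin X (network_open X Y f \<F> g)"
  unfolding network_open_def by (simp add: openin_diff)

lemma network_open_cong:
  "(\<And>F. F \<in> \<F> \<Longrightarrow> g F = h F) \<Longrightarrow> network_open X Y f \<F> g = network_open X Y f \<F> h"
  unfolding network_open_def by (simp cong: SUP_cong)

lemma network_open_Int_dense:
  assumes "\<And>F. openin Y (g F)" and "Y closure_of D = topspace Y"
  shows "network_open X Y f \<F> (\<lambda>F. g F \<inter> D) = network_open X Y f \<F> g"
proof -
  have "Y closure_of (g F \<inter> D) = Y closure_of g F" for F
    using closure_of_openin_Int_superset[of Y "g F" D] assms openin_subset by metis
  then show ?thesis unfolding network_open_def by simp
qed

lemma Sigma_network_separating_member:
  assumes Y: "Hausdorff_space Y" and f: "continuous_map X Y f" "inj_on f (topspace X)"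
    and net: "Sigma_network X \<F> \<C>"
    and K: "closedin X K" and W: "openin X W" "K \<subseteq> W" and z: "z \<in> topspace X - W"
  obtains F P where "F \<in> \<F>" "z \<in> F" "openin Y P" "F - W \<subseteq> {x \<in> topspace X. f x \<in> P}"
    "disjnt (F \<inter> K) {x \<in> topspace X. f x \<in> Y closure_of P}"
proof -
  obtain C where C: "C \<in> \<C>" "z \<in> C" using net z unfolding Sigma_network_def by blast
  have Ccl: "closedin X C" and Ccpt: "compactin X C"
    using net C(1) unfolding Sigma_network_def by auto
  have CX: "C \<subseteq> topspace X" using Ccl closedin_subset by blast
  have "compactin X (C - W)" "compactin X (C \<inter> K)"
    using Ccpt Ccl W(1) K by (auto intro: closed_compactin)
  moreover have "disjnt (f ` (C - W)) (f ` (C \<inter> K))"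
    using f(2) CX W(2) unfolding disjnt_def inj_on_def by blast
  ultimately obtain P Q where PQ: "openin Y P" "openin Y Q" "f ` (C - W) \<subseteq> P"
      "f ` (C \<inter> K) \<subseteq> Q" "disjnt P Q"
    using Y image_compactin[OF _ f(1)] unfolding Hausdorff_space_compact_sets by meson
  define G where "G = ({x \<in> topspace X. f x \<in> P} \<union> W) \<inter> ({x \<in> topspace X. f x \<in> Q} \<union> (topspace X - K))"
  have "openin X {x \<in> topspace X. f x \<in> P}" "openin X {x \<in> topspace X. f x \<in> Q}"
    using openin_continuous_map_preimage[OF f(1)] PQ(1,2) by auto
  then have "openin X G"
    unfolding G_def using W(1) K by (intro openin_Int openin_Un openin_diff) auto
  moreover have "C \<subseteq> G" using CX PQ(3,4) unfolding G_def by auto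
  ultimately obtain F where F: "F \<in> \<F>" "C \<subseteq> F" "F \<subseteq> G"
    using net C(1) unfolding Sigma_network_def by meson
  have "Q \<inter> Y closure_of P = {}"
    using openin_Int_closure_of_eq_empty[OF PQ(2)] PQ(5) unfolding disjnt_def by blast
  then show thesis
    using that[OF F(1) _ PQ(1)] F(2,3) C(2) unfolding G_def disjnt_def by blast
qed

lemma Sigma_network_separation:
  assumes Y: "Hausdorff_space Y" and f: "continuous_map X Y f" "inj_on f (topspace X)"
    and net: "Sigma_network X \<F> \<C>"
    and K: "closedin X K" and W: "openin X W" "K \<subseteq> W"
  obtains g where "\<And>F. openin Y (g F)"
    "\<And>F. disjnt (F \<inter> K) {x \<in> topspace X. f x \<in> Y closure_of g F}"
    "topspace X - W \<subseteq> (\<Union>F\<in>\<F>. F \<inter> {x \<in> topspace X. f x \<in> g F})"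
proof -
  define good where "good F P \<longleftrightarrow> openin Y P \<and> F - W \<subseteq> {x \<in> topspace X. f x \<in> P} \<and>
      disjnt (F \<inter> K) {x \<in> topspace X. f x \<in> Y closure_of P}" for F P
  define g where "g F = (if \<exists>P. good F P then SOME P. good F P else {})" for F
  have good_g: "good F (g F)" if "\<exists>P. good F P" for F
    using someI_ex[OF that] that unfolding g_def by simp
  have g_empty: "g F = {}" if "\<nexists>P. good F P" for F
    using that unfolding g_def by auto
  have g_sep: "openin Y (g F) \<and> disjnt (F \<inter> K) {x \<in> topspace X. f x \<in> Y closure_of g F}" for F
  proof (cases "\<exists>P. good F P")
    case True
    then show ?thesis using good_g[OF True] unfolding good_def by blast
  next
    case False
    then show ?thesis using g_empty[OF False] by simp
  qed
  show thesis
  proof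
    show "openin Y (g F)" "disjnt (F \<inter> K) {x \<in> topspace X. f x \<in> Y closure_of g F}" for F
      using g_sep by auto
    show "topspace X - W \<subseteq> (\<Union>F\<in>\<F>. F \<inter> {x \<in> topspace X. f x \<in> g F})"
    proof
      fix z assume z: "z \<in> topspace X - W"
      obtain F P where "F \<in> \<F>" "z \<in> F" "openin Y P" "F - W \<subseteq> {x \<in> topspace X. f x \<in> P}"
          "disjnt (F \<inter> K) {x \<in> topspace X. f x \<in> Y closure_of P}"
        using Sigma_network_separating_member[OF Y f net K W z] .
      then have "F \<in> \<F>" "z \<in> F" "good F P" unfolding good_def by auto
      then show "z \<in> (\<Union>F\<in>\<F>. F \<inter> {x \<in> topspace X. f x \<in> g F})"
        using good_g[of F] z unfolding good_def by blast
    qed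
  qed
qed

lemma network_open_neighbourhood:
  assumes X: "regular_space X" and Y: "Hausdorff_space Y"
    and f: "continuous_map X Y f" "inj_on f (topspace X)" and net: "Sigma_network X \<F> \<C>"
    and W: "openin X W" "x \<in> W"
  obtains g where "\<And>F. openin Y (g F)" "x \<in> network_open X Y f \<F> g" "network_open X Y f \<F> g \<subseteq> W"
proof -
  have "closedin X (topspace X - W)" "x \<in> topspace X - (topspace X - W)"
    using W openin_subset by auto
  then obtain U where U: "openin X U" "x \<in> U" "disjnt (topspace X - W) (X closure_of U)"
    using X unfolding regular_space by blast
  then have clU: "X closure_of U \<subseteq> W"
    using closure_of_subset_topspace[of X U] unfolding disjnt_def by auto
  obtain g where g: "\<And>F. openin Y (g F)"
      "\<And>F. disjnt (F \<inter> X closure_of U) {x \<in> topspace X. f x \<in> Y closure_of g F}"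
      "topspace X - W \<subseteq> (\<Union>F\<in>\<F>. F \<inter> {x \<in> topspace X. f x \<in> g F})"
    by (rule Sigma_network_separation[OF Y f net closedin_closure_of W(1) clU]) blast
  define Z where "Z = (\<Union>F\<in>\<F>. F \<inter> {x \<in> topspace X. f x \<in> Y closure_of g F})"
  have O_eq: "network_open X Y f \<F> g = topspace X - X closure_of Z"
    unfolding network_open_def Z_def ..
  have "U \<inter> Z = {}"
    using g(2) closure_of_subset[OF openin_subset[OF U(1)]] unfolding Z_def disjnt_def by blast
  then have "x \<in> network_open X Y f \<F> g"
    using openin_Int_closure_of_eq_empty[OF U(1)] U(2) W openin_subset unfolding O_eq by blast
  moreover have "network_open X Y f \<F> g \<subseteq> W"
  proof -
    have "(\<Union>F\<in>\<F>. F \<inter> {x \<in> topspace X. f x \<in> g F}) \<subseteq> Z"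
      unfolding Z_def using closure_of_subset[OF openin_subset[OF g(1)]] by blast
    also have "Z \<subseteq> X closure_of Z"
      unfolding Z_def by (rule closure_of_subset) auto
    finally show ?thesis using g(3) unfolding O_eq by blast
  qed
  ultimately show thesis using that g(1) by blast
qed

lemma base_of_topology_network_opens:
  assumes X: "regular_space X" and Y: "Hausdorff_space Y"
    and f: "continuous_map X Y f" "inj_on f (topspace X)" and net: "Sigma_network X \<F> \<C>"
    and D: "Y closure_of D = topspace Y"
  shows "base_of_topology X ((\<lambda>R. network_open X Y f \<F> (\<lambda>F. {d. (F, d) \<in> R})) ` Pow (\<F> \<times> D))"
  unfolding base_of_topology_def
proof (intro conjI ballI allI impI)
  show "openin X V" if "V \<in> (\<lambda>R. network_open X Y f \<F> (\<lambda>F. {d. (F, d) \<in> R})) ` Pow (\<F> \<times> D)" for V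
    using that openin_network_open by blast
  fix W x assume "openin X W \<and> x \<in> W"
  then obtain g where g: "\<And>F. openin Y (g F)"
      "x \<in> network_open X Y f \<F> g" "network_open X Y f \<F> g \<subseteq> W"
    using network_open_neighbourhood[OF X Y f net] by blast
  define R where "R = {(F, d). F \<in> \<F> \<and> d \<in> g F \<inter> D}"
  have "network_open X Y f \<F> (\<lambda>F. {d. (F, d) \<in> R}) = network_open X Y f \<F> (\<lambda>F. g F \<inter> D)"
    by (rule network_open_cong) (auto simp: R_def)
  also have "\<dots> = network_open X Y f \<F> g"
    by (rule network_open_Int_dense[OF g(1) D])
  moreover have "R \<in> Pow (\<F> \<times> D)" unfolding R_def by auto
  ultimately show "\<exists>V\<in>(\<lambda>R. network_open X Y f \<F> (\<lambda>F. {d. (F, d) \<in> R})) ` Pow (\<F> \<times> D). x \<in> V \<and> V \<subseteq> W"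
    using g(2,3) by blast
qed

lemma countable_Pow_lepoll_reals:
  assumes "countable A" shows "Pow A \<lesssim> (UNIV :: real set)"
proof -
  have "inj_on (\<lambda>B. to_nat_on A ` B) (Pow A)"
    using assms by (intro inj_on_image_Pow) (simp add: inj_on_to_nat_on)
  then have "Pow A \<lesssim> (UNIV :: nat set set)" unfolding lepoll_def by blast
  also have "(UNIV :: nat set set) \<lesssim> (UNIV :: real set)"
    using nat_sets_eqpoll_reals eqpoll_imp_lepoll by blast
  finally show ?thesis .
qed

theorem theorem4:
  fixes X :: "'a topology" and Y :: "'b topology" and S :: "'b set"
  assumes "regular_space X" and "Lindelof_Sigma_space X"
    and "Hausdorff_space Y" and "separable_space Y"
    and "S \<subseteq> topspace Y" and "X homeomorphic_space subtopology Y S"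
  shows "weight_le_continuum X"
proof -
  obtain f where f: "homeomorphic_map X (subtopology Y S) f"
    using assms(6) homeomorphic_space by blast
  have cont: "continuous_map X Y f"
    using homeomorphic_imp_continuous_map[OF f] by (simp add: continuous_map_in_subtopology)
  note inj = homeomorphic_imp_injective_map[OF f]
  obtain D where D: "countable D" "Y closure_of D = topspace Y"
    using assms(4) unfolding separable_space_def by blast
  obtain \<F> \<C> where net: "countable \<F>" "Sigma_network X \<F> \<C>"
    using assms(2) unfolding Lindelof_Sigma_space_iff by blast
  let ?\<B> = "(\<lambda>R. network_open X Y f \<F> (\<lambda>F. {d. (F, d) \<in> R})) ` Pow (\<F> \<times> D)"
  have "base_of_topology X ?\<B>"
    using base_of_topology_network_opens[OF assms(1,3) cont inj net(2) D(2)] .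
  moreover have "?\<B> \<lesssim> (UNIV :: real set)"
    by (rule lepoll_trans[OF image_lepoll countable_Pow_lepoll_reals]) (simp add: net(1) D(1))
  ultimately show ?thesis
    unfolding weight_le_continuum_def by blast
qed

end
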